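(* Consider a sequence of problems indexed by $k\to\infty$, with $n_1=n_1(k)$, $n_2=n_2(k)$ and probability vectors ${\bf P}_c=(p_{c1},\ldots,p_{ck})$ depending on $k$; let $n=n_1+n_2$ and $\boldsymbol\xi={\bf P}_1-{\bf P}_2$, and assume: (Condition 1) $\min(n_1,n_2)\to\infty$ and $n_1/n\to c\in(0,1)$; (Condition 2) $\max_i p_{ci}^2/\|{\bf P}_c\|_2^2\to0$ for $c=1,2$; (Condition 3) $n\|{\bf P}_1+{\bf P}_2\|_2^2\ge\epsilon$ for some constant $\epsilon>0$; (Condition 4) $n^2\|\boldsymbol{\xi}\|_2^4=O(\|{\bf P}_1+{\bf P}_2\|_2^2)$. Let $X_{1i},X_{2i}$, $1\le i\le k$, be mutually independent Poisson random variables with means $\lambda_{1i}=n_1p_{1i}$ and $\lambda_{2i}=n_2p_{2i}$. Then $$\frac{\sum_{i=1}^k f_i(X_{1i},X_{2i})}{\sigma_k}\xrightarrow{d}N(0,1).$$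
   Context: $f^*(x_1,x_2)=\left(\frac{x_1}{n_1}-\frac{x_2}{n_2}\right)^2-\frac{x_1}{n_1^2}-\frac{x_2}{n_2^2}$; with $\xi_i=p_{1i}-p_{2i}$, $f_i(x_1,x_2)=f^*(x_1,x_2)-\xi_i^2-2\xi_i\left(\frac{x_1}{n_1}-\frac{x_2}{n_2}\right)+2\xi_i^2$; $\sigma_k^2=2\sum_{i=1}^k\left(\frac{p_{1i}}{n_1}+\frac{p_{2i}}{n_2}\right)^2$; $\|{\bf x}\|_2^2=\sum_ix_i^2$. *)

theory Defs
  imports "HOL-Probability.Probability" "HOL-Library.Landau_Symbols"
begin

definition fstar :: "nat \<Rightarrow> nat \<Rightarrow> real \<Rightarrow> real \<Rightarrow> real" where
  "fstar n1 n2 x1 x2 = (x1 / real n1 - x2 / real n2)^2 - x1 / (real n1)^2 - x2 / (real n2)^2"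

text \<open>f_i with xi = p_{1i} - p_{2i}, written literally as in the paper\<close>
definition fi :: "nat \<Rightarrow> nat \<Rightarrow> real \<Rightarrow> real \<Rightarrow> real \<Rightarrow> real" where
  "fi n1 n2 xi x1 x2 = fstar n1 n2 x1 x2 - xi^2 - 2 * xi * (x1 / real n1 - x2 / real n2) + 2 * xi^2"

definition sigma_k :: "nat \<Rightarrow> nat \<Rightarrow> nat \<Rightarrow> (nat \<Rightarrow> real) \<Rightarrow> (nat \<Rightarrow> real) \<Rightarrow> real" where
  "sigma_k k n1 n2 p1 p2 = sqrt (2 * (\<Sum>i=1..k. (p1 i / real n1 + p2 i / real n2)^2))"

end

theory Submission
  imports Defs
begin

text \<open>Writing \<open>A\<^sub>c = X\<^sub>c - \<lambda>\<^sub>c\<close>, the summand is exactly centred: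
  \<open>f\<^sub>i(X\<^sub>1, X\<^sub>2) = (A\<^sub>1\<^sup>2 - X\<^sub>1)/n\<^sub>1\<^sup>2 + (A\<^sub>2\<^sup>2 - X\<^sub>2)/n\<^sub>2\<^sup>2 - 2 A\<^sub>1 A\<^sub>2/(n\<^sub>1 n\<^sub>2)\<close>. Since the factorial moments of a Poisson variable are
  \<open>E[X(X-1)\<dots>(X-j+1)] = \<lambda>\<^sup>j\<close>, every polynomial moment is explicit; the summand has variance
  \<open>2 q\<^sub>i\<^sup>2\<close> with \<open>q\<^sub>i = p\<^sub>1\<^sub>i/n\<^sub>1 + p\<^sub>2\<^sub>i/n\<^sub>2\<close> (so the variances add up to \<open>\<sigma>\<^sub>k\<^sup>2\<close>) and fourth
  moment \<open>O(q\<^sub>i\<^sup>2/m\<^sup>4 + q\<^sub>i\<^sup>4)\<close> with \<open>m = min(n\<^sub>1, n\<^sub>2)\<close>. A Lyapunov central limit theorem with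
  fourth moments, proved with characteristic functions, applies because the Lyapunov ratio is
  at most a constant times \<open>n\<^sup>3/(\<epsilon> m\<^sup>4) + (n/m)\<^sup>2 \<Sum>\<^sub>c max\<^sub>i p\<^sub>c\<^sub>i\<^sup>2 / \<parallel>P\<^sub>c\<parallel>\<^sup>2\<close>, which tends
  to 0 by Conditions 1--3.\<close>

section \<open>Factorial moments of the Poisson distribution\<close>

definition falling_factorial :: "nat \<Rightarrow> real \<Rightarrow> real" where
  "falling_factorial j x = (\<Prod>t<j. x - real t)"

lemma falling_factorial_0 [simp]: "falling_factorial 0 x = 1"
  unfolding falling_factorial_def by simp

lemma falling_factorial_Suc: "falling_factorial (Suc j) x = falling_factorial j x * (x - real j)"
  unfolding falling_factorial_def by simp

lemma falling_factorial_Suc_shift: "falling_factorial (Suc j) x = x * falling_factorial j (x - 1)"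
  unfolding falling_factorial_def prod.lessThan_Suc_shift by (simp add: diff_diff_eq add.commute)

lemma falling_factorial_eq_0: "m < j \<Longrightarrow> falling_factorial j (real m) = 0"
  unfolding falling_factorial_def by (rule prod_zero) auto

lemma falling_factorial_nonneg: "0 \<le> falling_factorial j (real m)"
proof (induction j)
  case (Suc j)
  show ?case
  proof (cases "m < Suc j")
    case False
    then show ?thesis using Suc by (simp add: falling_factorial_Suc)
  qed (simp add: falling_factorial_eq_0)
qed simp

lemma falling_factorial_mult_fact: "falling_factorial j (real (m + j)) * fact m = fact (m + j)"
proof (induction j arbitrary: m)
  case (Suc j)
  have "falling_factorial (Suc j) (real (m + Suc j)) * fact m
      = falling_factorial j (real (Suc m + j)) * fact (Suc m)"
    by (simp add: falling_factorial_Suc algebra_simps)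
  also have "\<dots> = fact (m + Suc j)" using Suc[of "Suc m"] by simp
  finally show ?case .
qed simp

lemma poisson_falling_factorial_sums:
  "(\<lambda>m. l ^ m / fact m * exp (- l) * falling_factorial j (real m)) sums (l ^ j)"
proof -
  let ?f = "\<lambda>m. l ^ m / fact m * exp (- l) * falling_factorial j (real m)"
  have "(\<lambda>i. l ^ j * exp (- l) * (l ^ i /\<^sub>R fact i)) sums (l ^ j * exp (- l) * exp l)"
    by (intro sums_mult exp_converges)
  moreover have "?f (i + j) = l ^ j * exp (- l) * (l ^ i /\<^sub>R fact i)" for i
  proof -
    have "falling_factorial j (real (i + j)) = fact (i + j) / fact i"
      using falling_factorial_mult_fact[of j i] by (simp add: field_simps)
    then show ?thesis by (simp add: power_add field_simps)
  qed
  ultimately have "(\<lambda>i. ?f (i + j)) sums (l ^ j)"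
    by (simp add: mult.assoc flip: exp_add)
  then have "?f sums (l ^ j + (\<Sum>i<j. ?f i))" by (rule sums_iff_shift[THEN iffD1])
  then show ?thesis by (simp add: falling_factorial_eq_0)
qed

text \<open>A polynomial written in the basis of falling factorials, coefficients listed from degree 0.\<close>

primrec newton_poly :: "real list \<Rightarrow> real \<Rightarrow> real" where
  "newton_poly [] x = 0"
| "newton_poly (c # cs) x = c + x * newton_poly cs (x - 1)"

lemma newton_poly_eq_sum: "newton_poly cs x = (\<Sum>j<length cs. cs ! j * falling_factorial j x)"
proof (induction cs arbitrary: x)
  case (Cons c cs)
  have "(\<Sum>j<length (c # cs). (c # cs) ! j * falling_factorial j x)
      = c + (\<Sum>j<length cs. cs ! j * falling_factorial (Suc j) x)"
    by (simp add: sum.lessThan_Suc_shift del: sum.lessThan_Suc)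
  also have "\<dots> = c + (\<Sum>j<length cs. cs ! j * (x * falling_factorial j (x - 1)))"
    by (simp only: falling_factorial_Suc_shift)
  also have "\<dots> = newton_poly (c # cs) x"
    by (simp add: Cons sum_distrib_left mult.left_commute)
  finally show ?case ..
qed simp

lemma newton_poly_expansions:
  fixes x l :: real
  shows "x - l = newton_poly [- l, 1] x"
    and "(x - l)^2 = newton_poly [l^2, 1 - 2*l, 1] x"
    and "(x - l)^4 = newton_poly [l^4, 1 - 4*l + 6*l^2 - 4*l^3, 7 - 12*l + 6*l^2, 6 - 4*l, 1] x"
    and "(x - l)^2 - x = newton_poly [l^2, -2*l, 1] x"
    and "((x - l)^2 - x)^2 = newton_poly [l^4, 4*l^2 - 4*l^3, 2 - 8*l + 6*l^2, 4 - 4*l, 1] x"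
    and "((x - l)^2 - x)^4 = newton_poly [l^8, 16*l^4 - 32*l^5 + 24*l^6 - 8*l^7,
      8 - 64*l + 208*l^2 - 352*l^3 + 316*l^4 - 144*l^5 + 28*l^6,
      208 - 800*l + 1232*l^2 - 944*l^3 + 360*l^4 - 56*l^5, 652 - 1472*l + 1256*l^2 - 480*l^3 + 70*l^4,
      576 - 784*l + 360*l^2 - 56*l^3, 188 - 144*l + 28*l^2, 24 - 8*l, 1] x"
    and "((x - l)^2 - x) * (x - l) = newton_poly [- (l^3), -2*l + 3*l^2, 2 - 3*l, 1] x"
  by simp_all algebra+

locale poisson_rv = prob_space M for M :: "'a measure" +
  fixes Y :: "'a \<Rightarrow> nat" and l :: real
  assumes measurable_Y [measurable]: "Y \<in> measurable M (count_space UNIV)"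
    and rate_nonneg: "0 \<le> l"
    and prob_Y_eq: "\<And>m. measure M {\<omega> \<in> space M. Y \<omega> = m} = l ^ m / fact m * exp (- l)"
begin

abbreviation dev :: "'a \<Rightarrow> real" where "dev \<omega> \<equiv> real (Y \<omega>) - l"

text \<open>Its mean is 0 because a Poisson variable has equal mean and variance.\<close>

abbreviation excess :: "'a \<Rightarrow> real" where "excess \<omega> \<equiv> (dev \<omega>)^2 - real (Y \<omega>)"

definition weight :: "nat \<Rightarrow> real" where "weight m = l ^ m / fact m * exp (- l)"

lemma weight_nonneg: "0 \<le> weight m"
  unfolding weight_def using rate_nonneg by simp

lemma distr_Y_eq_density:
  "distr M (count_space UNIV) Y = density (count_space UNIV) (\<lambda>m. ennreal (weight m))"
proof (rule measure_eqI_countable[where A=UNIV])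
  fix a :: nat
  have "emeasure (distr M (count_space UNIV) Y) {a} = emeasure M {\<omega> \<in> space M. Y \<omega> = a}"
    by (subst emeasure_distr) (auto intro!: arg_cong[where f="emeasure M"])
  also have "\<dots> = ennreal (weight a)"
    by (subst emeasure_eq_measure) (simp add: prob_Y_eq weight_def)
  also have "\<dots> = emeasure (density (count_space UNIV) (\<lambda>m. ennreal (weight m))) {a}"
    by (subst emeasure_density) (auto simp: nn_integral_count_space_finite)
  finally show "emeasure (distr M (count_space UNIV) Y) {a}
      = emeasure (density (count_space UNIV) (\<lambda>m. ennreal (weight m))) {a}" .
qed auto

lemma
  fixes g :: "nat \<Rightarrow> real"
  assumes "summable (\<lambda>m. \<bar>weight m * g m\<bar>)"
  shows integrable_comp_Y: "integrable M (\<lambda>\<omega>. g (Y \<omega>))"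
    and expectation_comp_Y: "(\<integral>\<omega>. g (Y \<omega>) \<partial>M) = (\<Sum>m. weight m * g m)"
proof -
  have int: "integrable (count_space UNIV) (\<lambda>m. weight m *\<^sub>R g m)"
    using assms by (simp add: integrable_count_space_nat_iff)
  then have "integrable (distr M (count_space UNIV) Y) g"
    unfolding distr_Y_eq_density by (subst integrable_density) (auto simp: weight_nonneg)
  then show "integrable M (\<lambda>\<omega>. g (Y \<omega>))" by (subst (asm) integrable_distr_eq) auto
  have "(\<integral>\<omega>. g (Y \<omega>) \<partial>M) = integral\<^sup>L (distr M (count_space UNIV) Y) g"
    by (subst integral_distr) auto
  also have "\<dots> = integral\<^sup>L (count_space UNIV) (\<lambda>m. weight m *\<^sub>R g m)"
    unfolding distr_Y_eq_density by (subst integral_density) (auto simp: weight_nonneg)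
  also have "\<dots> = (\<Sum>m. weight m * g m)" using int by (simp add: integral_count_space_nat)
  finally show "(\<integral>\<omega>. g (Y \<omega>) \<partial>M) = (\<Sum>m. weight m * g m)" .
qed

lemma
  shows integrable_falling_factorial: "integrable M (\<lambda>\<omega>. falling_factorial j (real (Y \<omega>)))"
    and expectation_falling_factorial: "(\<integral>\<omega>. falling_factorial j (real (Y \<omega>)) \<partial>M) = l ^ j"
proof -
  have sums: "(\<lambda>m. weight m * falling_factorial j (real m)) sums (l ^ j)"
    using poisson_falling_factorial_sums[of l j] by (simp add: weight_def)
  moreover have "(\<lambda>m. \<bar>weight m * falling_factorial j (real m)\<bar>)
      = (\<lambda>m. weight m * falling_factorial j (real m))"
    using weight_nonneg falling_factorial_nonneg by (simp add: abs_mult)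
  ultimately have "summable (\<lambda>m. \<bar>weight m * falling_factorial j (real m)\<bar>)"
    by (simp add: sums_summable)
  from integrable_comp_Y[OF this] expectation_comp_Y[OF this] sums
  show "integrable M (\<lambda>\<omega>. falling_factorial j (real (Y \<omega>)))"
    and "(\<integral>\<omega>. falling_factorial j (real (Y \<omega>)) \<partial>M) = l ^ j"
    by (simp_all add: sums_iff)
qed

lemma
  assumes "\<And>x. P x = newton_poly cs x"
  shows integrable_newton_poly: "integrable M (\<lambda>\<omega>. P (real (Y \<omega>)))"
    and expectation_newton_poly: "(\<integral>\<omega>. P (real (Y \<omega>)) \<partial>M) = horner_sum id l cs"
  using integrable_falling_factorial expectation_falling_factorial
  by (auto simp: assms newton_poly_eq_sum integral_sum horner_sum_eq_sum atLeast0LessThan)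

lemma dev_moments:
  shows "integrable M dev" and "expectation dev = 0"
    and "integrable M (\<lambda>\<omega>. dev \<omega> ^ 2)" and "expectation (\<lambda>\<omega>. dev \<omega> ^ 2) = l"
    and "integrable M (\<lambda>\<omega>. dev \<omega> ^ 4)" and "expectation (\<lambda>\<omega>. dev \<omega> ^ 4) = l + 3 * l^2"
proof -
  note expansion = newton_poly_expansions[where l=l]
  show "integrable M dev" "integrable M (\<lambda>\<omega>. dev \<omega> ^ 2)" "integrable M (\<lambda>\<omega>. dev \<omega> ^ 4)"
    using integrable_newton_poly[OF expansion(1)] integrable_newton_poly[OF expansion(2)]
      integrable_newton_poly[OF expansion(3)] by simp_all
  show "expectation dev = 0" "expectation (\<lambda>\<omega>. dev \<omega> ^ 2) = l"
    "expectation (\<lambda>\<omega>. dev \<omega> ^ 4) = l + 3 * l^2"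
    using expectation_newton_poly[OF expansion(1)] expectation_newton_poly[OF expansion(2)]
      expectation_newton_poly[OF expansion(3)] by (simp_all add: algebra_simps eval_nat_numeral)
qed

lemma excess_moments:
  shows "integrable M excess" and "expectation excess = 0"
    and "integrable M (\<lambda>\<omega>. excess \<omega> ^ 2)" and "expectation (\<lambda>\<omega>. excess \<omega> ^ 2) = 2 * l^2"
    and "integrable M (\<lambda>\<omega>. excess \<omega> ^ 4)"
    and "expectation (\<lambda>\<omega>. excess \<omega> ^ 4) = 8 * l^2 + 144 * l^3 + 60 * l^4"
    and "integrable M (\<lambda>\<omega>. excess \<omega> * dev \<omega>)"
proof -
  note expansion = newton_poly_expansions[where l=l]
  show "integrable M excess" "integrable M (\<lambda>\<omega>. excess \<omega> ^ 2)" "integrable M (\<lambda>\<omega>. excess \<omega> ^ 4)"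
    "integrable M (\<lambda>\<omega>. excess \<omega> * dev \<omega>)"
    using integrable_newton_poly[OF expansion(4)] integrable_newton_poly[OF expansion(5)]
      integrable_newton_poly[OF expansion(6)] integrable_newton_poly[OF expansion(7)] by simp_all
  show "expectation excess = 0" "expectation (\<lambda>\<omega>. excess \<omega> ^ 2) = 2 * l^2"
    "expectation (\<lambda>\<omega>. excess \<omega> ^ 4) = 8 * l^2 + 144 * l^3 + 60 * l^4"
    using expectation_newton_poly[OF expansion(4)] expectation_newton_poly[OF expansion(5)]
      expectation_newton_poly[OF expansion(6)] by (simp_all add: algebra_simps eval_nat_numeral)
qed

end

section \<open>A central limit theorem under fourth moment conditions\<close>

lemma abs_exp_minus_first_order_le:
  fixes a :: real
  assumes "0 \<le> a"
  shows "\<bar>1 - a - exp (- a)\<bar> \<le> a^2 / 2"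
proof -
  obtain s where "exp (- a) = (\<Sum>m<3. (- a) ^ m / fact m) + (exp s / fact 3) * (- a) ^ 3"
    using Maclaurin_exp_le[of "- a" 3] by blast
  then have "exp (- a) = 1 - a + a^2/2 - exp s / 6 * a ^ 3"
    by (simp add: eval_nat_numeral)
  moreover have "0 \<le> exp s / 6 * a ^ 3" using assms by simp
  moreover have "1 - a \<le> exp (- a)" by (rule exp_minus_ge)
  ultimately show ?thesis by (simp add: abs_if)
qed

lemma abs_cube_le:
  fixes z d :: real
  assumes "d > 0"
  shows "\<bar>z\<bar> ^ 3 \<le> (d * z^2 + z^4 / d) / 2"
proof -
  have "d * z^2 + z^4 / d - 2 * \<bar>z\<bar>^3 = z^2 * (d - \<bar>z\<bar>)^2 / d"
    using assms by (simp add: field_simps power2_eq_square eval_nat_numeral)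
  also have "\<dots> \<ge> 0" using assms by simp
  finally show ?thesis by simp
qed

lemma (in prob_space)
  fixes Z :: "'a \<Rightarrow> real"
  assumes [measurable]: "Z \<in> borel_measurable M" and int4: "integrable M (\<lambda>\<omega>. Z \<omega> ^ 4)"
  shows integrable_of_integrable_pow4: "integrable M Z"
    and integrable_sq_of_integrable_pow4: "integrable M (\<lambda>\<omega>. Z \<omega> ^ 2)"
    and second_moment_sq_le_fourth_moment:
      "(expectation (\<lambda>\<omega>. Z \<omega> ^ 2))^2 \<le> expectation (\<lambda>\<omega>. Z \<omega> ^ 4)"
proof -
  have int: "integrable M (\<lambda>\<omega>. 1 + Z \<omega> ^ 4)" using int4 by simp
  have sq_le: "z^2 \<le> 1 + z^4" for z :: real
  proof -
    have "0 \<le> (z^2 - 1/2)^2" by simp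
    then show ?thesis by (simp add: power2_eq_square algebra_simps eval_nat_numeral)
  qed
  have abs_le: "\<bar>z\<bar> \<le> 1 + z^4" for z :: real
  proof -
    have "\<bar>z\<bar> \<le> (1 + z^2) / 2"
      using sum_squares_bound[of 1 "\<bar>z\<bar>"] by (simp add: power2_eq_square)
    moreover have "0 \<le> (z^2 - 1/2)^2" "0 \<le> z^4" by simp_all
    ultimately show ?thesis by (simp add: power2_eq_square algebra_simps eval_nat_numeral)
  qed
  show "integrable M Z"
    by (rule Bochner_Integration.integrable_bound[OF int]) (auto intro!: AE_I2 simp: abs_le)
  show int2: "integrable M (\<lambda>\<omega>. Z \<omega> ^ 2)"
    by (rule Bochner_Integration.integrable_bound[OF int]) (auto intro!: AE_I2 simp: sq_le)
  define v where "v = expectation (\<lambda>\<omega>. Z \<omega> ^ 2)"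
  have "0 \<le> expectation (\<lambda>\<omega>. (Z \<omega> ^ 2 - v)^2)" by simp
  also have "(\<lambda>\<omega>. (Z \<omega> ^ 2 - v)^2) = (\<lambda>\<omega>. Z \<omega> ^ 4 - 2 * v * Z \<omega> ^ 2 + v^2)"
    by (auto simp: power2_eq_square algebra_simps eval_nat_numeral)
  also have "expectation \<dots> = expectation (\<lambda>\<omega>. Z \<omega> ^ 4) - 2 * v * v + v^2"
    using int4 int2 by (simp add: prob_space v_def)
  finally show "v^2 \<le> expectation (\<lambda>\<omega>. Z \<omega> ^ 4)" by (simp add: power2_eq_square)
qed

text \<open>The free parameter \<open>d\<close> balances the third absolute moment between the second and
  fourth moments.\<close>

lemma (in prob_space) char_approx_fourth_moment:
  fixes Z :: "'a \<Rightarrow> real" and t d :: real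
  assumes [measurable]: "Z \<in> borel_measurable M" and int4: "integrable M (\<lambda>\<omega>. Z \<omega> ^ 4)"
    and mean: "expectation Z = 0" and d: "d > 0"
  defines "v \<equiv> expectation (\<lambda>\<omega>. Z \<omega> ^ 2)" and "\<mu>4 \<equiv> expectation (\<lambda>\<omega>. Z \<omega> ^ 4)"
  shows "cmod (char (distr M borel Z) t - exp (- (t^2 * v / 2)))
     \<le> \<bar>t\<bar>^3 / 12 * (d * v + \<mu>4 / d) + t^4 / 8 * \<mu>4"
proof -
  note int = integrable_of_integrable_pow4[OF assms(1) int4]
    integrable_sq_of_integrable_pow4[OF assms(1) int4]
  have "cmod (char (distr M borel Z) t - (1 - t^2 * v / 2)) \<le>
      (t^2 / 6) * expectation (\<lambda>x. min (6 * (Z x)^2) (\<bar>t\<bar> * \<bar>Z x\<bar>^3))"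
    using int mean by (intro char_approx3') (auto simp: v_def)
  also have "\<dots> \<le> (t^2 / 6) * expectation (\<lambda>x. \<bar>t\<bar> / 2 * (d * Z x ^ 2 + Z x ^ 4 / d))"
  proof (intro mult_left_mono integral_mono)
    show "integrable M (\<lambda>x. min (6 * (Z x)^2) (\<bar>t\<bar> * \<bar>Z x\<bar>^3))"
      by (rule Bochner_Integration.integrable_bound[where f="\<lambda>x. 6 * (Z x)^2"])
        (use int in \<open>auto intro!: AE_I2\<close>)
    show "min (6 * (Z x)^2) (\<bar>t\<bar> * \<bar>Z x\<bar>^3) \<le> \<bar>t\<bar> / 2 * (d * Z x ^ 2 + Z x ^ 4 / d)" for x
      using mult_left_mono[OF abs_cube_le[OF d, of "Z x"], of "\<bar>t\<bar>"] by simp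
  qed (use int int4 in auto)
  also have "\<dots> = \<bar>t\<bar>^3 / 12 * (d * v + \<mu>4 / d)"
    using int int4 by (simp add: v_def \<mu>4_def power2_eq_square power3_eq_cube abs_mult_self_eq)
  finally have char_near: "cmod (char (distr M borel Z) t - (1 - t^2 * v / 2))
      \<le> \<bar>t\<bar>^3 / 12 * (d * v + \<mu>4 / d)" .
  have "0 \<le> t^2 * v / 2" by (simp add: v_def)
  then have "cmod (complex_of_real (1 - t^2 * v / 2) - exp (- (t^2 * v / 2))) \<le> (t^2 * v / 2)^2 / 2"
    using abs_exp_minus_first_order_le by (simp flip: of_real_diff of_real_exp)
  also have "\<dots> = t^4 / 8 * v^2" by (simp add: power_mult_distrib power_divide eval_nat_numeral)
  also have "\<dots> \<le> t^4 / 8 * \<mu>4"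
    using second_moment_sq_le_fourth_moment[OF assms(1) int4]
    by (intro mult_left_mono) (auto simp: v_def \<mu>4_def)
  finally have exp_near: "cmod (complex_of_real (1 - t^2 * v / 2) - exp (- (t^2 * v / 2)))
      \<le> t^4 / 8 * \<mu>4" .
  have "cmod (char (distr M borel Z) t - exp (- (t^2 * v / 2)))
      \<le> cmod (char (distr M borel Z) t - (1 - t^2 * v / 2))
        + cmod (complex_of_real (1 - t^2 * v / 2) - exp (- (t^2 * v / 2)))"
    by (rule order_trans[OF _ norm_triangle_ineq]) simp
  with char_near exp_near show ?thesis by linarith
qed

lemma (in prob_space) char_sum_approx_fourth_moment:
  fixes Z :: "'i \<Rightarrow> 'a \<Rightarrow> real" and I :: "'i set" and t d L :: real
  assumes fin: "finite I" and indep: "indep_vars (\<lambda>_. borel) Z I"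
    and int4: "\<And>i. i \<in> I \<Longrightarrow> integrable M (\<lambda>\<omega>. Z i \<omega> ^ 4)"
    and mean: "\<And>i. i \<in> I \<Longrightarrow> expectation (Z i) = 0"
    and var: "(\<Sum>i\<in>I. expectation (\<lambda>\<omega>. Z i \<omega> ^ 2)) = 1"
    and L: "(\<Sum>i\<in>I. expectation (\<lambda>\<omega>. Z i \<omega> ^ 4)) \<le> L" and d: "d > 0"
  shows "cmod (char (distr M borel (\<lambda>\<omega>. \<Sum>i\<in>I. Z i \<omega>)) t - exp (- (t^2) / 2))
    \<le> \<bar>t\<bar>^3 / 12 * (d + L / d) + t^4 / 8 * L"
proof -
  have rv: "\<And>i. i \<in> I \<Longrightarrow> Z i \<in> borel_measurable M" using indep by (simp add: indep_vars_def2)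
  define v where "v i = expectation (\<lambda>\<omega>. Z i \<omega> ^ 2)" for i
  define \<mu>4 where "\<mu>4 i = expectation (\<lambda>\<omega>. Z i \<omega> ^ 4)" for i
  define w where "w i = complex_of_real (exp (- (t^2 * v i / 2)))" for i
  have "(\<Sum>i\<in>I. - (t^2 * v i / 2)) = - (t^2) / 2"
    using var by (simp add: v_def sum_negf flip: sum_distrib_left sum_divide_distrib)
  then have "complex_of_real (exp (- (t^2) / 2)) = (\<Prod>i\<in>I. w i)"
    using exp_sum[OF fin, of "\<lambda>i. - (t^2 * v i / 2)"] by (simp add: w_def)
  moreover have "char (distr M borel (\<lambda>\<omega>. \<Sum>i\<in>I. Z i \<omega>)) t = (\<Prod>i\<in>I. char (distr M borel (Z i)) t)"
    by (rule char_distr_sum[OF indep])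
  moreover have "cmod ((\<Prod>i\<in>I. char (distr M borel (Z i)) t) - (\<Prod>i\<in>I. w i))
      \<le> (\<Sum>i\<in>I. cmod (char (distr M borel (Z i)) t - w i))"
  proof (rule norm_prod_diff)
    show "cmod (char (distr M borel (Z i)) t) \<le> 1" if "i \<in> I" for i
      using real_distribution.cmod_char_le_1[OF real_distribution_distr[OF rv[OF that]]] .
    show "cmod (w i) \<le> 1" for i by (simp add: w_def v_def)
  qed
  moreover have "\<dots> \<le> (\<Sum>i\<in>I. (\<bar>t\<bar>^3 / 12 * d) * v i + (\<bar>t\<bar>^3 / (12 * d) + t^4 / 8) * \<mu>4 i)"
  proof (rule sum_mono)
    fix i assume "i \<in> I"
    from char_approx_fourth_moment[OF rv[OF this] int4[OF this] mean[OF this] d, of t]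
    show "cmod (char (distr M borel (Z i)) t - w i)
        \<le> (\<bar>t\<bar>^3 / 12 * d) * v i + (\<bar>t\<bar>^3 / (12 * d) + t^4 / 8) * \<mu>4 i"
      using d by (simp add: w_def v_def \<mu>4_def field_simps)
  qed
  moreover have "\<dots> = (\<bar>t\<bar>^3 / 12 * d) * (\<Sum>i\<in>I. v i) + (\<bar>t\<bar>^3 / (12 * d) + t^4 / 8) * (\<Sum>i\<in>I. \<mu>4 i)"
    by (simp add: sum.distrib sum_distrib_left)
  moreover have "\<dots> \<le> \<bar>t\<bar>^3 / 12 * (d + L / d) + t^4 / 8 * L"
  proof -
    have "(\<bar>t\<bar>^3 / (12 * d) + t^4 / 8) * (\<Sum>i\<in>I. \<mu>4 i) \<le> (\<bar>t\<bar>^3 / (12 * d) + t^4 / 8) * L"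
      using L d by (intro mult_left_mono) (auto simp: \<mu>4_def)
    moreover have "\<bar>t\<bar>^3 / 12 * (d + L / d) + t^4 / 8 * L
        = (\<bar>t\<bar>^3 / 12 * d) * 1 + (\<bar>t\<bar>^3 / (12 * d) + t^4 / 8) * L"
      using d by (simp add: field_simps)
    ultimately show ?thesis using var by (simp add: v_def)
  qed
  ultimately show ?thesis by simp
qed

lemma clt_fourth_moment:
  fixes M :: "nat \<Rightarrow> 'a measure" and I :: "nat \<Rightarrow> 'i set" and Z :: "nat \<Rightarrow> 'i \<Rightarrow> 'a \<Rightarrow> real"
    and L :: "nat \<Rightarrow> real"
  assumes prob: "\<And>k. prob_space (M k)"
    and measurable: "\<And>k. (\<lambda>\<omega>. \<Sum>i\<in>I k. Z k i \<omega>) \<in> borel_measurable (M k)"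
    and conditions: "eventually (\<lambda>k. finite (I k) \<and> prob_space.indep_vars (M k) (\<lambda>_. borel) (Z k) (I k)
      \<and> (\<forall>i\<in>I k. integrable (M k) (\<lambda>\<omega>. Z k i \<omega> ^ 4) \<and> (\<integral>\<omega>. Z k i \<omega> \<partial>M k) = 0)
      \<and> (\<Sum>i\<in>I k. \<integral>\<omega>. Z k i \<omega> ^ 2 \<partial>M k) = 1
      \<and> (\<Sum>i\<in>I k. \<integral>\<omega>. Z k i \<omega> ^ 4 \<partial>M k) \<le> L k) sequentially"
    and L: "L \<longlonglongrightarrow> 0"
  shows "weak_conv_m (\<lambda>k. distr (M k) borel (\<lambda>\<omega>. \<Sum>i\<in>I k. Z k i \<omega>)) std_normal_distribution"
proof (rule levy_continuity)
  show "real_distribution (distr (M k) borel (\<lambda>\<omega>. \<Sum>i\<in>I k. Z k i \<omega>))" for k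
    by (rule prob_space.real_distribution_distr[OF prob measurable])
  show "real_distribution std_normal_distribution" by (rule real_dist_normal_dist)
  fix t :: real
  let ?char = "\<lambda>k. char (distr (M k) borel (\<lambda>\<omega>. \<Sum>i\<in>I k. Z k i \<omega>)) t"
  have "?char \<longlonglongrightarrow> exp (- (t^2) / 2)"
  proof (rule tendstoI)
    fix e :: real assume e: "e > 0"
    define d where "d = 6 * e / (\<bar>t\<bar>^3 + 1)"
    have t3: "0 < \<bar>t\<bar>^3 + 1" by (simp add: add_nonneg_pos)
    then have d: "d > 0" using e by (simp add: d_def)
    have small_d: "\<bar>t\<bar>^3 / 12 * d < e / 2"
      using e t3 by (simp add: d_def field_simps)
    define K where "K = \<bar>t\<bar>^3 / (12 * d) + t^4 / 8"
    have "(\<lambda>k. K * L k) \<longlonglongrightarrow> 0" using tendsto_mult_right_zero[OF L] .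
    then have "eventually (\<lambda>k. K * L k < e / 2) sequentially"
      using e by (auto dest: order_tendstoD(2)[where a="e / 2"])
    with conditions show "eventually (\<lambda>k. dist (?char k) (exp (- (t^2) / 2)) < e) sequentially"
    proof eventually_elim
      case (elim k)
      interpret prob_space "M k" by (rule prob)
      have "cmod (?char k - exp (- (t^2) / 2)) \<le> \<bar>t\<bar>^3 / 12 * (d + L k / d) + t^4 / 8 * L k"
        by (rule char_sum_approx_fourth_moment) (use elim d in auto)
      also have "\<dots> = \<bar>t\<bar>^3 / 12 * d + K * L k"
        using d by (simp add: K_def field_simps)
      finally show ?case unfolding dist_norm using small_d elim by linarith
    qed
  qed
  then show "?char \<longlonglongrightarrow> char std_normal_distribution t"
    by (simp add: char_std_normal_distribution)
qed

section \<open>The centred two-sample summand\<close>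

lemma power4_sum3_le:
  fixes a b c :: real
  shows "(a + b + c)^4 \<le> 27 * (a^4 + b^4 + c^4)"
proof -
  have sq3: "(x + y + z)^2 \<le> 3 * (x^2 + y^2 + z^2)" for x y z :: real
  proof -
    have "0 \<le> (x - y)^2 + (y - z)^2 + (z - x)^2" by simp
    then show ?thesis by (simp add: power2_eq_square algebra_simps)
  qed
  have "(a + b + c)^4 = ((a + b + c)^2)^2" by simp
  also have "\<dots> \<le> (3 * (a^2 + b^2 + c^2))^2" by (rule power_mono[OF sq3]) simp
  also have "\<dots> = 9 * (a^2 + b^2 + c^2)^2" by (simp only: power_mult_distrib) simp
  also have "\<dots> \<le> 9 * (3 * ((a^2)^2 + (b^2)^2 + (c^2)^2))" using sq3[of "a^2" "b^2" "c^2"] by simp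
  finally show ?thesis by simp
qed

lemma (in prob_space)
  fixes g h :: "nat \<Rightarrow> real"
  assumes indep: "indep_var (count_space UNIV) Y1 (count_space UNIV) Y2"
    and int1: "integrable M (\<lambda>\<omega>. g (Y1 \<omega>))" and int2: "integrable M (\<lambda>\<omega>. h (Y2 \<omega>))"
  shows integrable_indep_mult: "integrable M (\<lambda>\<omega>. g (Y1 \<omega>) * h (Y2 \<omega>))"
    and expectation_indep_mult:
      "(\<integral>\<omega>. g (Y1 \<omega>) * h (Y2 \<omega>) \<partial>M) = (\<integral>\<omega>. g (Y1 \<omega>) \<partial>M) * (\<integral>\<omega>. h (Y2 \<omega>) \<partial>M)"
proof -
  have "indep_var borel (g \<circ> Y1) borel (h \<circ> Y2)"
    by (rule indep_var_compose[OF indep]) auto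
  then have iv: "indep_var borel (\<lambda>\<omega>. g (Y1 \<omega>)) borel (\<lambda>\<omega>. h (Y2 \<omega>))" by (simp add: comp_def)
  show "integrable M (\<lambda>\<omega>. g (Y1 \<omega>) * h (Y2 \<omega>))" by (rule indep_var_integrable[OF iv int1 int2])
  show "(\<integral>\<omega>. g (Y1 \<omega>) * h (Y2 \<omega>) \<partial>M) = (\<integral>\<omega>. g (Y1 \<omega>) \<partial>M) * (\<integral>\<omega>. h (Y2 \<omega>) \<partial>M)"
    by (rule indep_var_lebesgue_integral[OF iv int1 int2])
qed

locale poisson_pair = P1: poisson_rv M Y1 l1 + P2: poisson_rv M Y2 l2
  for M :: "'a measure" and Y1 Y2 :: "'a \<Rightarrow> nat" and l1 l2 :: real +
  assumes indep: "prob_space.indep_var M (count_space UNIV) Y1 (count_space UNIV) Y2"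
begin

definition T :: "real \<Rightarrow> real \<Rightarrow> 'a \<Rightarrow> real" where
  "T a b \<omega> = a^2 * P1.excess \<omega> + b^2 * P2.excess \<omega> - 2 * a * b * (P1.dev \<omega> * P2.dev \<omega>)"

lemma measurable_T [measurable]: "T a b \<in> borel_measurable M"
  unfolding T_def by measurable

lemmas integrable_mult = P1.integrable_indep_mult[OF indep]
lemmas expectation_mult = P1.expectation_indep_mult[OF indep]

lemma expectation_T: "(\<integral>\<omega>. T a b \<omega> \<partial>M) = 0"
  unfolding T_def using P1.excess_moments P2.excess_moments P1.dev_moments P2.dev_moments
    integrable_mult[OF P1.dev_moments(1) P2.dev_moments(1)]
    expectation_mult[OF P1.dev_moments(1) P2.dev_moments(1)]
  by simp

lemma expectation_T_sq: "(\<integral>\<omega>. (T a b \<omega>)^2 \<partial>M) = 2 * (a^2 * l1 + b^2 * l2)^2"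
proof -
  have expand: "(T a b \<omega>)^2 = a^4 * P1.excess \<omega> ^ 2 + b^4 * P2.excess \<omega> ^ 2
     + 4 * a^2 * b^2 * (P1.dev \<omega> ^ 2 * P2.dev \<omega> ^ 2)
     + 2 * a^2 * b^2 * (P1.excess \<omega> * P2.excess \<omega>)
     - 4 * a^3 * b * ((P1.excess \<omega> * P1.dev \<omega>) * P2.dev \<omega>)
     - 4 * a * b^3 * (P1.dev \<omega> * (P2.excess \<omega> * P2.dev \<omega>))" for \<omega>
    unfolding T_def by (simp add: power2_eq_square eval_nat_numeral algebra_simps)
  have "(\<integral>\<omega>. (T a b \<omega>)^2 \<partial>M) = a^4 * (2 * l1^2) + b^4 * (2 * l2^2) + 4 * a^2 * b^2 * (l1 * l2)"
    unfolding expand using P1.excess_moments P2.excess_moments P1.dev_moments P2.dev_moments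
      integrable_mult[OF P1.dev_moments(3) P2.dev_moments(3)]
      expectation_mult[OF P1.dev_moments(3) P2.dev_moments(3)]
      integrable_mult[OF P1.excess_moments(1) P2.excess_moments(1)]
      expectation_mult[OF P1.excess_moments(1) P2.excess_moments(1)]
      integrable_mult[OF P1.excess_moments(7) P2.dev_moments(1)]
      expectation_mult[OF P1.excess_moments(7) P2.dev_moments(1)]
      integrable_mult[OF P1.dev_moments(1) P2.excess_moments(7)]
      expectation_mult[OF P1.dev_moments(1) P2.excess_moments(7)]
    by simp
  then show ?thesis by (simp add: power2_eq_square eval_nat_numeral algebra_simps)
qed

lemma T_pow4_le: "(T a b \<omega>)^4 \<le> 27 * (a^8 * P1.excess \<omega> ^ 4 + b^8 * P2.excess \<omega> ^ 4
    + 16 * a^4 * b^4 * (P1.dev \<omega> ^ 4 * P2.dev \<omega> ^ 4))"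
proof -
  have "(T a b \<omega>)^4 = (a^2 * P1.excess \<omega> + b^2 * P2.excess \<omega>
     + (- 2 * a * b * (P1.dev \<omega> * P2.dev \<omega>)))^4" unfolding T_def by simp
  also have "\<dots> \<le> 27 * ((a^2 * P1.excess \<omega>)^4 + (b^2 * P2.excess \<omega>)^4
     + (- 2 * a * b * (P1.dev \<omega> * P2.dev \<omega>))^4)" by (rule power4_sum3_le)
  also have "\<dots> = 27 * (a^8 * P1.excess \<omega> ^ 4 + b^8 * P2.excess \<omega> ^ 4
    + 16 * a^4 * b^4 * (P1.dev \<omega> ^ 4 * P2.dev \<omega> ^ 4))"
    by (simp add: power_mult_distrib flip: power_mult)
  finally show ?thesis .
qed

lemma
  shows integrable_T_pow4: "integrable M (\<lambda>\<omega>. (T a b \<omega>)^4)"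
    and expectation_T_pow4_le: "(\<integral>\<omega>. (T a b \<omega>)^4 \<partial>M) \<le> 27 * (a^8 * (8 * l1^2 + 144 * l1^3 + 60 * l1^4)
      + b^8 * (8 * l2^2 + 144 * l2^3 + 60 * l2^4) + 16 * a^4 * b^4 * ((l1 + 3 * l1^2) * (l2 + 3 * l2^2)))"
proof -
  let ?B = "\<lambda>\<omega>. 27 * (a^8 * P1.excess \<omega> ^ 4 + b^8 * P2.excess \<omega> ^ 4
    + 16 * a^4 * b^4 * (P1.dev \<omega> ^ 4 * P2.dev \<omega> ^ 4))"
  note dev4 = integrable_mult[OF P1.dev_moments(5) P2.dev_moments(5)]
    expectation_mult[OF P1.dev_moments(5) P2.dev_moments(5)]
  have int_B: "integrable M ?B" using P1.excess_moments P2.excess_moments dev4 by simp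
  show int: "integrable M (\<lambda>\<omega>. (T a b \<omega>)^4)"
  proof (rule Bochner_Integration.integrable_bound[OF int_B])
    show "AE \<omega> in M. norm ((T a b \<omega>)^4) \<le> norm (?B \<omega>)"
    proof (rule AE_I2)
      fix \<omega>
      have "0 \<le> (T a b \<omega>)^4" by simp
      with T_pow4_le[of a b \<omega>] show "norm ((T a b \<omega>)^4) \<le> norm (?B \<omega>)"
        unfolding real_norm_def by linarith
    qed
  qed simp
  have "(\<integral>\<omega>. (T a b \<omega>)^4 \<partial>M) \<le> (\<integral>\<omega>. ?B \<omega> \<partial>M)"
    by (rule integral_mono[OF int int_B T_pow4_le])
  also have "\<dots> = 27 * (a^8 * (8 * l1^2 + 144 * l1^3 + 60 * l1^4)
      + b^8 * (8 * l2^2 + 144 * l2^3 + 60 * l2^4) + 16 * a^4 * b^4 * ((l1 + 3 * l1^2) * (l2 + 3 * l2^2)))"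
    using P1.excess_moments P2.excess_moments P1.dev_moments P2.dev_moments dev4 by simp
  finally show "(\<integral>\<omega>. (T a b \<omega>)^4 \<partial>M) \<le> \<dots>" .
qed

end

lemma borel_measurable_nat_pair_comp:
  fixes U V :: "'a \<Rightarrow> nat" and G :: "nat \<Rightarrow> nat \<Rightarrow> real"
  assumes U: "U \<in> measurable M (count_space UNIV)" and V: "V \<in> measurable M (count_space UNIV)"
  shows "(\<lambda>\<omega>. G (U \<omega>) (V \<omega>)) \<in> borel_measurable M"
proof -
  have "(\<lambda>\<omega>. G n (V \<omega>)) \<in> borel_measurable M" for n
    using measurable_compose[OF V, of "G n" borel] by simp
  then show ?thesis by (rule measurable_compose_countable[OF _ U])
qed

lemma (in prob_space)
  fixes U V :: "nat \<Rightarrow> 'a \<Rightarrow> nat" and J :: "nat set"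
  assumes indep: "indep_vars (\<lambda>_. count_space UNIV) (\<lambda>(b, i). if b then U i else V i) (UNIV \<times> J)"
    and i: "i \<in> J"
  shows indep_vars_pair_measurable1: "U i \<in> measurable M (count_space UNIV)"
    and indep_vars_pair_measurable2: "V i \<in> measurable M (count_space UNIV)"
    and indep_vars_pair_indep_var: "indep_var (count_space UNIV) (U i) (count_space UNIV) (V i)"
proof -
  let ?X = "\<lambda>(b, i). if b then U i else V i"
  have rv: "\<And>j. j \<in> UNIV \<times> J \<Longrightarrow> random_variable (count_space UNIV) (?X j)"
    using indep unfolding indep_vars_def2 by blast
  show "U i \<in> measurable M (count_space UNIV)" using rv[of "(True, i)"] i by simp
  show "V i \<in> measurable M (count_space UNIV)" using rv[of "(False, i)"] i by simp
  have "indep_var (Pi\<^sub>M {(True, i)} (\<lambda>_. count_space UNIV)) (\<lambda>\<omega>. restrict (\<lambda>j. ?X j \<omega>) {(True, i)})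
      (Pi\<^sub>M {(False, i)} (\<lambda>_. count_space UNIV)) (\<lambda>\<omega>. restrict (\<lambda>j. ?X j \<omega>) {(False, i)})"
    by (rule indep_var_restrict[OF indep]) (use i in auto)
  then have "indep_var (count_space UNIV) ((\<lambda>f. f (True, i)) \<circ> (\<lambda>\<omega>. restrict (\<lambda>j. ?X j \<omega>) {(True, i)}))
      (count_space UNIV) ((\<lambda>f. f (False, i)) \<circ> (\<lambda>\<omega>. restrict (\<lambda>j. ?X j \<omega>) {(False, i)}))"
    by (rule indep_var_compose) (auto intro: measurable_component_singleton)
  also have "(\<lambda>f. f (True, i)) \<circ> (\<lambda>\<omega>. restrict (\<lambda>j. ?X j \<omega>) {(True, i)}) = U i"
    by (auto simp: fun_eq_iff)
  also have "(\<lambda>f. f (False, i)) \<circ> (\<lambda>\<omega>. restrict (\<lambda>j. ?X j \<omega>) {(False, i)}) = V i"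
    by (auto simp: fun_eq_iff)
  finally show "indep_var (count_space UNIV) (U i) (count_space UNIV) (V i)" .
qed

lemma (in prob_space) indep_vars_pair_comp:
  fixes U V :: "nat \<Rightarrow> 'a \<Rightarrow> nat" and J :: "nat set" and G :: "nat \<Rightarrow> nat \<Rightarrow> nat \<Rightarrow> real"
  assumes indep: "indep_vars (\<lambda>_. count_space UNIV) (\<lambda>(b, i). if b then U i else V i) (UNIV \<times> J)"
  shows "indep_vars (\<lambda>_. borel) (\<lambda>i \<omega>. G i (U i \<omega>) (V i \<omega>)) J"
proof -
  let ?X = "\<lambda>(b, i). if b then U i else V i"
  define K where "K i = {(True, i), (False, i)}" for i :: nat
  have "indep_vars (\<lambda>i. Pi\<^sub>M (K i) (\<lambda>_. count_space UNIV)) (\<lambda>i \<omega>. restrict (\<lambda>j. ?X j \<omega>) (K i)) J"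
    by (rule indep_vars_restrict[OF indep]) (auto simp: K_def disjoint_family_on_def)
  then have "indep_vars (\<lambda>_. borel)
      (\<lambda>i \<omega>. (\<lambda>f. G i (f (True, i)) (f (False, i))) (restrict (\<lambda>j. ?X j \<omega>) (K i))) J"
  proof (rule indep_vars_compose2)
    fix i
    have "(\<lambda>f. f (b, i)) \<in> measurable (Pi\<^sub>M (K i) (\<lambda>_. count_space UNIV)) (count_space (UNIV :: nat set))"
      for b by (rule measurable_component_singleton) (simp add: K_def)
    from borel_measurable_nat_pair_comp[OF this this]
    show "(\<lambda>f. G i (f (True, i)) (f (False, i))) \<in> borel_measurable (Pi\<^sub>M (K i) (\<lambda>_. count_space UNIV))" .
  qed
  then show ?thesis
    by (rule indep_vars_cong[THEN iffD1, rotated 3]) (auto simp: K_def)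
qed

lemma fi_eq_centred:
  fixes n1 n2 :: nat and p1 p2 x1 x2 :: real
  assumes "n1 > 0" "n2 > 0"
  shows "fi n1 n2 (p1 - p2) x1 x2 = (1 / real n1)^2 * ((x1 - real n1 * p1)^2 - x1)
     + (1 / real n2)^2 * ((x2 - real n2 * p2)^2 - x2)
     - 2 * (1 / real n1) * (1 / real n2) * ((x1 - real n1 * p1) * (x2 - real n2 * p2))"
  using assms unfolding fi_def fstar_def by (simp add: field_simps power2_eq_square)

lemma scaled_power_bounds:
  fixes n m x q :: real
  assumes m: "0 < m" "m \<le> n" and x: "0 \<le> x" "x \<le> q"
  shows "x^2 / n^4 \<le> q^2 / m^4" and "x^3 / n^2 \<le> (q^2 / m^4 + q^4) / 2" and "x^4 \<le> q^4"
    and "x / n^2 + 3 * x^2 \<le> q / m^2 + 3 * q^2"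
proof -
  have n: "0 < n" using m by simp
  have x2: "x^2 \<le> q^2" using x by (intro power_mono) auto
  moreover have "m^4 \<le> n^4" using m by (intro power_mono) auto
  ultimately show sq: "x^2 / n^4 \<le> q^2 / m^4" using m x by (intro frac_le) auto
  show pow4: "x^4 \<le> q^4" using x by (intro power_mono) auto
  have "2 * (x / n^2) * x^2 \<le> (x / n^2)^2 + (x^2)^2"
    using sum_squares_bound[of "x / n^2" "x^2"] by (simp add: power2_eq_square)
  then have "x^3 / n^2 \<le> (x^2 / n^4 + x^4) / 2"
    using n by (simp add: field_simps power2_eq_square eval_nat_numeral)
  also have "(x^2 / n^4 + x^4) / 2 \<le> (q^2 / m^4 + q^4) / 2"
    using sq pow4 by (intro divide_right_mono add_mono) auto
  finally show "x^3 / n^2 \<le> (q^2 / m^4 + q^4) / 2" .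
  have "x / n^2 \<le> q / m^2" using m x by (intro frac_le) (auto intro: power_mono)
  with x2 show "x / n^2 + 3 * x^2 \<le> q / m^2 + 3 * q^2" by linarith
qed

lemma T_fourth_moment_bound_le:
  fixes n1 n2 m p1 p2 :: real
  assumes m: "0 < m" "m \<le> n1" "m \<le> n2" and p: "0 \<le> p1" "0 \<le> p2"
  defines "q \<equiv> p1 / n1 + p2 / n2"
  shows "27 * ((1/n1)^8 * (8 * (n1*p1)^2 + 144 * (n1*p1)^3 + 60 * (n1*p1)^4)
      + (1/n2)^8 * (8 * (n2*p2)^2 + 144 * (n2*p2)^3 + 60 * (n2*p2)^4)
      + 16 * (1/n1)^4 * (1/n2)^4 * ((n1*p1 + 3 * (n1*p1)^2) * (n2*p2 + 3 * (n2*p2)^2)))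
    \<le> 15000 * (q^2 / m^4 + q^4)"
proof -
  have n1: "0 < n1" and n2: "0 < n2" using m by auto
  define u where "u = p1 / n1"
  define w where "w = p2 / n2"
  have u: "0 \<le> u" "u \<le> q" and w: "0 \<le> w" "w \<le> q"
    using p n1 n2 by (auto simp: u_def w_def q_def)
  define A where "A = q^2 / m^4"
  define B where "B = q^4"
  have "0 \<le> A" "0 \<le> B" by (auto simp: A_def B_def)
  note bu = scaled_power_bounds[OF m(1,2) u, folded A_def B_def]
    and bw = scaled_power_bounds[OF m(1,3) w, folded A_def B_def]
  have "(u / n1^2 + 3 * u^2) * (w / n2^2 + 3 * w^2) \<le> (q / m^2 + 3 * q^2) * (q / m^2 + 3 * q^2)"
    using bu(4) bw(4) u w n1 n2 by (intro mult_mono) auto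
  also have "\<dots> \<le> 2 * (q / m^2)^2 + 2 * (3 * q^2)^2"
  proof -
    have "(x + y) * (x + y) \<le> 2 * x^2 + 2 * y^2" for x y :: real
      using sum_squares_bound[of x y] by (simp add: power2_eq_square algebra_simps)
    then show ?thesis .
  qed
  also have "\<dots> = 2 * A + 18 * B"
    by (simp add: A_def B_def power2_eq_square eval_nat_numeral field_simps)
  finally have cross: "(u / n1^2 + 3 * u^2) * (w / n2^2 + 3 * w^2) \<le> 2 * A + 18 * B" .
  have "27 * (8 * (u^2/n1^4) + 144 * (u^3/n1^2) + 60 * u^4 + (8 * (w^2/n2^4) + 144 * (w^3/n2^2) + 60 * w^4)
      + 16 * ((u / n1^2 + 3 * u^2) * (w / n2^2 + 3 * w^2))) \<le> 15000 * (A + B)"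
  proof -
    have "27 * (8 * a1 + 144 * a2 + 60 * a3 + (8 * b1 + 144 * b2 + 60 * b3) + 16 * c) \<le> 15000 * (A + B)"
      if "a1 \<le> A" "a2 \<le> (A + B) / 2" "a3 \<le> B" "b1 \<le> A" "b2 \<le> (A + B) / 2" "b3 \<le> B"
        "c \<le> 2 * A + 18 * B" for a1 a2 a3 b1 b2 b3 c :: real
      using that \<open>0 \<le> A\<close> \<open>0 \<le> B\<close> by (simp add: algebra_simps)
    from this[OF bu(1-3) bw(1-3) cross] show ?thesis .
  qed
  moreover have "(1/n1)^8 * (8 * (n1*p1)^2 + 144 * (n1*p1)^3 + 60 * (n1*p1)^4)
      = 8 * (u^2/n1^4) + 144 * (u^3/n1^2) + 60 * u^4"
    using n1 by (simp add: u_def field_simps eval_nat_numeral)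
  moreover have "(1/n2)^8 * (8 * (n2*p2)^2 + 144 * (n2*p2)^3 + 60 * (n2*p2)^4)
      = 8 * (w^2/n2^4) + 144 * (w^3/n2^2) + 60 * w^4"
    using n2 by (simp add: w_def field_simps eval_nat_numeral)
  moreover have "(1/n1)^4 * (1/n2)^4 * ((n1*p1 + 3 * (n1*p1)^2) * (n2*p2 + 3 * (n2*p2)^2))
     = (u / n1^2 + 3 * u^2) * (w / n2^2 + 3 * w^2)"
    using n1 n2 by (simp add: u_def w_def field_simps eval_nat_numeral)
  ultimately show ?thesis by (simp add: A_def B_def)
qed

lemma fi_poisson_moments:
  fixes n1 n2 :: nat and p1 p2 m :: real
  assumes pair: "poisson_pair M Y1 Y2 (real n1 * p1) (real n2 * p2)"
    and m: "0 < m" "m \<le> real n1" "m \<le> real n2" and p: "0 \<le> p1" "0 \<le> p2"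
  defines "F \<equiv> \<lambda>\<omega>. fi n1 n2 (p1 - p2) (real (Y1 \<omega>)) (real (Y2 \<omega>))"
    and "q \<equiv> p1 / real n1 + p2 / real n2"
  shows "integrable M (\<lambda>\<omega>. F \<omega> ^ 4)" and "(\<integral>\<omega>. F \<omega> \<partial>M) = 0"
    and "(\<integral>\<omega>. F \<omega> ^ 2 \<partial>M) = 2 * q^2" and "(\<integral>\<omega>. F \<omega> ^ 4 \<partial>M) \<le> 15000 * (q^2 / m^4 + q^4)"
proof -
  interpret poisson_pair M Y1 Y2 "real n1 * p1" "real n2 * p2" by (rule pair)
  have n: "0 < n1" "0 < n2" using m by auto
  have F: "F = T (1 / real n1) (1 / real n2)"
    using n by (simp add: F_def T_def fun_eq_iff fi_eq_centred)
  show "integrable M (\<lambda>\<omega>. F \<omega> ^ 4)" unfolding F by (rule integrable_T_pow4)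
  show "(\<integral>\<omega>. F \<omega> \<partial>M) = 0" unfolding F by (rule expectation_T)
  show "(\<integral>\<omega>. F \<omega> ^ 2 \<partial>M) = 2 * q^2"
    unfolding F expectation_T_sq using n by (simp add: q_def power2_eq_square)
  show "(\<integral>\<omega>. F \<omega> ^ 4 \<partial>M) \<le> 15000 * (q^2 / m^4 + q^4)"
    unfolding F q_def by (rule order_trans[OF expectation_T_pow4_le T_fourth_moment_bound_le[OF m p]])
qed

lemma fi_normalised_summands:
  fixes M :: "'a measure" and X1 X2 :: "nat \<Rightarrow> 'a \<Rightarrow> nat" and n1 n2 k :: nat
    and p1 p2 :: "nat \<Rightarrow> real" and m :: real
  defines "q \<equiv> \<lambda>i. p1 i / real n1 + p2 i / real n2"
    and "Z \<equiv> \<lambda>i \<omega>. fi n1 n2 (p1 i - p2 i) (real (X1 i \<omega>)) (real (X2 i \<omega>)) / sigma_k k n1 n2 p1 p2"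
  assumes prob: "prob_space M"
    and indep: "prob_space.indep_vars M (\<lambda>_. count_space UNIV)
      (\<lambda>(b, i). if b then X1 i else X2 i) (UNIV \<times> {1..k})"
    and pois1: "\<And>i j. i \<in> {1..k} \<Longrightarrow> measure M {\<omega> \<in> space M. X1 i \<omega> = j}
      = (real n1 * p1 i)^j / fact j * exp (- (real n1 * p1 i))"
    and pois2: "\<And>i j. i \<in> {1..k} \<Longrightarrow> measure M {\<omega> \<in> space M. X2 i \<omega> = j}
      = (real n2 * p2 i)^j / fact j * exp (- (real n2 * p2 i))"
    and p: "\<And>i. i \<in> {1..k} \<Longrightarrow> 0 \<le> p1 i \<and> 0 \<le> p2 i"
    and m: "0 < m" "m \<le> real n1" "m \<le> real n2"
    and Q: "0 < (\<Sum>i=1..k. (q i)^2)"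
  shows "\<forall>i\<in>{1..k}. integrable M (\<lambda>\<omega>. Z i \<omega> ^ 4) \<and> (\<integral>\<omega>. Z i \<omega> \<partial>M) = 0"
    and "(\<Sum>i\<in>{1..k}. \<integral>\<omega>. Z i \<omega> ^ 2 \<partial>M) = 1"
    and "(\<Sum>i\<in>{1..k}. \<integral>\<omega>. Z i \<omega> ^ 4 \<partial>M)
      \<le> 15000 * ((\<Sum>i=1..k. (q i)^2) / m^4 + (\<Sum>i=1..k. (q i)^4)) / (4 * (\<Sum>i=1..k. (q i)^2)^2)"
proof -
  define Q where "Q = (\<Sum>i=1..k. (q i)^2)"
  define \<sigma> where "\<sigma> = sigma_k k n1 n2 p1 p2"
  have \<sigma>2: "\<sigma>^2 = 2 * Q" using Q by (simp add: \<sigma>_def sigma_k_def Q_def q_def)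
  note moments = fi_poisson_moments[OF _ m, of M "X1 i" "X2 i" "p1 i" "p2 i" for i]
  have pair: "poisson_pair M (X1 i) (X2 i) (real n1 * p1 i) (real n2 * p2 i)" if "i \<in> {1..k}" for i
    unfolding poisson_pair_def poisson_pair_axioms_def poisson_rv_def poisson_rv_axioms_def
    using prob p[OF that] pois1[OF that] pois2[OF that] prob_space.indep_vars_pair_indep_var[OF prob indep that]
      prob_space.indep_vars_pair_measurable1[OF prob indep that]
      prob_space.indep_vars_pair_measurable2[OF prob indep that] by auto
  show "\<forall>i\<in>{1..k}. integrable M (\<lambda>\<omega>. Z i \<omega> ^ 4) \<and> (\<integral>\<omega>. Z i \<omega> \<partial>M) = 0"
    using moments(1,2)[OF pair] p by (simp add: Z_def power_divide)
  have "(\<Sum>i\<in>{1..k}. \<integral>\<omega>. Z i \<omega> ^ 2 \<partial>M) = (\<Sum>i\<in>{1..k}. 2 * (q i)^2 / \<sigma>^2)"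
    using moments(3)[OF pair] p by (intro sum.cong) (simp_all add: Z_def power_divide \<sigma>_def q_def)
  also have "\<dots> = 1" using \<sigma>2 Q by (simp add: Q_def flip: sum_divide_distrib sum_distrib_left)
  finally show "(\<Sum>i\<in>{1..k}. \<integral>\<omega>. Z i \<omega> ^ 2 \<partial>M) = 1" .
  have "(\<Sum>i\<in>{1..k}. \<integral>\<omega>. Z i \<omega> ^ 4 \<partial>M) \<le> (\<Sum>i\<in>{1..k}. 15000 * ((q i)^2 / m^4 + (q i)^4) / \<sigma>^4)"
  proof (rule sum_mono)
    fix i assume i: "i \<in> {1..k}"
    have "(\<integral>\<omega>. Z i \<omega> ^ 4 \<partial>M)
        = (\<integral>\<omega>. fi n1 n2 (p1 i - p2 i) (real (X1 i \<omega>)) (real (X2 i \<omega>)) ^ 4 \<partial>M) / \<sigma>^4"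
      by (simp add: Z_def \<sigma>_def power_divide)
    also have "\<dots> \<le> 15000 * ((q i)^2 / m^4 + (q i)^4) / \<sigma>^4"
      using moments(4)[OF pair[OF i]] p[OF i] by (intro divide_right_mono) (auto simp: q_def)
    finally show "(\<integral>\<omega>. Z i \<omega> ^ 4 \<partial>M) \<le> 15000 * ((q i)^2 / m^4 + (q i)^4) / \<sigma>^4" .
  qed
  also have "\<dots> = 15000 * (Q / m^4 + (\<Sum>i=1..k. (q i)^4)) / (4 * Q^2)"
  proof -
    have "\<sigma>^4 = (\<sigma>^2)^2" by simp
    also have "\<dots> = 4 * Q^2" by (simp add: \<sigma>2 power_mult_distrib)
    finally have "\<sigma>^4 = 4 * Q^2" .
    then show ?thesis
      by (simp add: Q_def sum.distrib flip: sum_divide_distrib sum_distrib_left)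
  qed
  finally show "(\<Sum>i\<in>{1..k}. \<integral>\<omega>. Z i \<omega> ^ 4 \<partial>M)
      \<le> 15000 * ((\<Sum>i=1..k. (q i)^2) / m^4 + (\<Sum>i=1..k. (q i)^4)) / (4 * (\<Sum>i=1..k. (q i)^2)^2)"
    by (simp add: Q_def)
qed

section \<open>The Lyapunov ratio\<close>

lemma sum_power2_pos:
  fixes p :: "'i \<Rightarrow> real"
  assumes "(\<Sum>i\<in>A. p i) = 1"
  shows "0 < (\<Sum>i\<in>A. (p i)^2)"
proof -
  have "finite A" using assms by (metis sum.infinite zero_neq_one)
  moreover obtain i where "i \<in> A" "p i \<noteq> 0" using assms by (metis sum.neutral zero_neq_one)
  ultimately show ?thesis by (intro sum_pos2) auto
qed

lemma sum_mixture_sq_ge: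
  fixes p1 p2 :: "'i \<Rightarrow> real" and n1 n2 N :: real
  assumes p: "\<And>i. i \<in> A \<Longrightarrow> 0 \<le> p1 i \<and> 0 \<le> p2 i"
    and n: "0 < n1" "n1 \<le> N" "0 < n2" "n2 \<le> N"
  shows "(\<Sum>i\<in>A. (p1 i + p2 i)^2) / N^2 \<le> (\<Sum>i\<in>A. (p1 i / n1 + p2 i / n2)^2)"
proof -
  have "(\<Sum>i\<in>A. (p1 i + p2 i)^2) / N^2 = (\<Sum>i\<in>A. (p1 i / N + p2 i / N)^2)"
    by (simp add: sum_divide_distrib power_divide flip: add_divide_distrib)
  also have "\<dots> \<le> (\<Sum>i\<in>A. (p1 i / n1 + p2 i / n2)^2)"
  proof (rule sum_mono)
    fix i assume "i \<in> A"
    with p n show "(p1 i / N + p2 i / N)^2 \<le> (p1 i / n1 + p2 i / n2)^2"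
      by (intro power_mono add_mono divide_left_mono) auto
  qed
  finally show ?thesis .
qed

lemma mixture_sq_le_Max:
  fixes p1 p2 :: "'i \<Rightarrow> real" and n1 n2 m :: real
  assumes "finite A" "i \<in> A" and p: "0 \<le> p1 i" "0 \<le> p2 i"
    and m: "0 < m" "m \<le> n1" "m \<le> n2"
  shows "(p1 i / n1 + p2 i / n2)^2 \<le> 2 * ((MAX j\<in>A. (p1 j)^2) + (MAX j\<in>A. (p2 j)^2)) / m^2"
proof -
  have "(p1 i / n1 + p2 i / n2)^2 \<le> (p1 i / m + p2 i / m)^2"
    using p m by (intro power_mono add_mono divide_left_mono add_nonneg_nonneg) auto
  also have "\<dots> \<le> 2 * ((p1 i)^2 + (p2 i)^2) / m^2"
    using sum_squares_bound[of "p1 i" "p2 i"]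
    by (simp add: power_divide add_divide_distrib[symmetric] divide_right_mono power2_eq_square algebra_simps)
  also have "\<dots> \<le> 2 * ((MAX j\<in>A. (p1 j)^2) + (MAX j\<in>A. (p2 j)^2)) / m^2"
    using assms(1,2) by (intro divide_right_mono mult_left_mono add_mono Max_ge) auto
  finally show ?thesis .
qed

lemma sum_mixture_pow4_le:
  fixes p1 p2 :: "'i \<Rightarrow> real" and n1 n2 m :: real
  assumes "finite A" and p: "\<And>i. i \<in> A \<Longrightarrow> 0 \<le> p1 i \<and> 0 \<le> p2 i"
    and m: "0 < m" "m \<le> n1" "m \<le> n2"
  shows "(\<Sum>i\<in>A. (p1 i / n1 + p2 i / n2)^4)
    \<le> 2 * ((MAX j\<in>A. (p1 j)^2) + (MAX j\<in>A. (p2 j)^2)) / m^2 * (\<Sum>i\<in>A. (p1 i / n1 + p2 i / n2)^2)"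
  unfolding sum_distrib_left
proof (rule sum_mono)
  fix i assume "i \<in> A"
  let ?q = "p1 i / n1 + p2 i / n2" and ?c = "2 * ((MAX j\<in>A. (p1 j)^2) + (MAX j\<in>A. (p2 j)^2)) / m^2"
  have "?q^2 \<le> ?c" using p[OF \<open>i \<in> A\<close>] by (intro mixture_sq_le_Max[OF \<open>finite A\<close> \<open>i \<in> A\<close> _ _ m]) auto
  then show "?q^4 \<le> ?c * ?q^2"
    using mult_right_mono[of "?q^2" ?c "?q^2"] by (simp add: power2_eq_square eval_nat_numeral)
qed

lemma lyapunov_ratio_le:
  fixes p1 p2 :: "'i \<Rightarrow> real" and n1 n2 m N \<epsilon> :: real
  assumes "finite A" and p: "\<And>i. i \<in> A \<Longrightarrow> 0 \<le> p1 i \<and> 0 \<le> p2 i"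
    and sum1: "(\<Sum>i\<in>A. p1 i) = 1" and sum2: "(\<Sum>i\<in>A. p2 i) = 1"
    and m: "0 < m" "m \<le> n1" "m \<le> n2" and N: "n1 \<le> N" "n2 \<le> N"
    and \<epsilon>: "0 < \<epsilon>" "\<epsilon> \<le> N * (\<Sum>i\<in>A. (p1 i + p2 i)^2)"
  defines "q \<equiv> \<lambda>i. p1 i / n1 + p2 i / n2"
  shows "0 < (\<Sum>i\<in>A. (q i)^2)"
    and "15000 * ((\<Sum>i\<in>A. (q i)^2) / m^4 + (\<Sum>i\<in>A. (q i)^4)) / (4 * (\<Sum>i\<in>A. (q i)^2)^2)
       \<le> 15000 / 4 * (N^3 / (\<epsilon> * m^4) + 2 * N^2 / m^2 * ((MAX i\<in>A. (p1 i)^2) / (\<Sum>i\<in>A. (p1 i)^2)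
          + (MAX i\<in>A. (p2 i)^2) / (\<Sum>i\<in>A. (p2 i)^2)))"
proof -
  define Q where "Q = (\<Sum>i\<in>A. (q i)^2)"
  define S where "S = (\<Sum>i\<in>A. (p1 i + p2 i)^2)"
  define S1 where "S1 = (\<Sum>i\<in>A. (p1 i)^2)"
  define S2 where "S2 = (\<Sum>i\<in>A. (p2 i)^2)"
  define MX1 where "MX1 = (MAX i\<in>A. (p1 i)^2)"
  define MX2 where "MX2 = (MAX i\<in>A. (p2 i)^2)"
  have N0: "0 < N" using m N by linarith
  have S1: "0 < S1" and S2: "0 < S2"
    unfolding S1_def S2_def using sum_power2_pos sum1 sum2 by blast+
  have "S1 \<le> S" "S2 \<le> S" unfolding S1_def S2_def S_def
    using p by (auto intro!: sum_mono power_mono)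
  have QS: "S / N^2 \<le> Q"
    unfolding Q_def S_def q_def using m N by (intro sum_mixture_sq_ge[OF p]) auto
  have S: "0 < S" using S1 \<open>S1 \<le> S\<close> by linarith
  then have Q: "0 < Q" using QS N0 by (smt (verit) divide_pos_pos zero_less_power)
  then show "0 < (\<Sum>i\<in>A. (q i)^2)" by (simp add: Q_def)
  obtain i0 where "i0 \<in> A" using sum1 by fastforce
  then have MX: "0 \<le> MX1" "0 \<le> MX2" unfolding MX1_def MX2_def
    using \<open>finite A\<close> by (intro order_trans[OF zero_le_power2 Max_ge]; auto)+
  define c where "c = 2 * (MX1 + MX2) / m^2"
  have q4: "(\<Sum>i\<in>A. (q i)^4) \<le> c * Q"
    unfolding q_def c_def Q_def MX1_def MX2_def by (rule sum_mixture_pow4_le[OF \<open>finite A\<close> p m])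
  have inv_Q: "1 / Q \<le> N^3 / \<epsilon>"
  proof -
    have "1 / Q \<le> N^2 / S" using QS S N0 Q by (simp add: field_simps)
    also have "\<dots> \<le> N^2 / (\<epsilon> / N)"
      using \<epsilon> N0 S by (intro divide_left_mono) (auto simp: S_def field_simps)
    finally show ?thesis using N0 by (simp add: field_simps eval_nat_numeral)
  qed
  have MX_Q: "(MX1 + MX2) / Q \<le> N^2 * (MX1 / S1 + MX2 / S2)"
  proof -
    have "(MX1 + MX2) / Q \<le> (MX1 + MX2) / (S / N^2)"
      using QS S N0 MX Q by (intro divide_left_mono) auto
    also have "\<dots> = N^2 * (MX1 / S + MX2 / S)" using N0 S by (simp add: field_simps)
    also have "\<dots> \<le> N^2 * (MX1 / S1 + MX2 / S2)"
      using MX S1 S2 \<open>S1 \<le> S\<close> \<open>S2 \<le> S\<close> by (intro mult_left_mono add_mono divide_left_mono) auto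
    finally show ?thesis .
  qed
  have "15000 * (Q / m^4 + (\<Sum>i\<in>A. (q i)^4)) / (4 * Q^2) \<le> 15000 * (Q / m^4 + c * Q) / (4 * Q^2)"
    using q4 Q by (intro divide_right_mono mult_left_mono add_left_mono) auto
  also have "\<dots> = 15000 / 4 * (1 / Q / m^4 + 2 / m^2 * ((MX1 + MX2) / Q))"
    using Q m by (simp add: c_def field_simps power2_eq_square)
  also have "\<dots> \<le> 15000 / 4 * (N^3 / \<epsilon> / m^4 + 2 / m^2 * (N^2 * (MX1 / S1 + MX2 / S2)))"
    using inv_Q MX_Q m by (intro mult_left_mono add_mono divide_right_mono) auto
  finally show "15000 * ((\<Sum>i\<in>A. (q i)^2) / m^4 + (\<Sum>i\<in>A. (q i)^4)) / (4 * (\<Sum>i\<in>A. (q i)^2)^2)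
       \<le> 15000 / 4 * (N^3 / (\<epsilon> * m^4) + 2 * N^2 / m^2 * ((MAX i\<in>A. (p1 i)^2) / (\<Sum>i\<in>A. (p1 i)^2)
          + (MAX i\<in>A. (p2 i)^2) / (\<Sum>i\<in>A. (p2 i)^2)))"
    by (simp add: Q_def MX1_def MX2_def S1_def S2_def field_simps)
qed

lemma lyapunov_bound_tendsto_0:
  fixes n1 n2 :: "nat \<Rightarrow> nat" and R1 R2 :: "nat \<Rightarrow> real" and c \<epsilon> :: real
  assumes min_lim: "filterlim (\<lambda>k. min (n1 k) (n2 k)) at_top sequentially"
    and ratio_lim: "(\<lambda>k. real (n1 k) / real (n1 k + n2 k)) \<longlonglongrightarrow> c" and c: "0 < c" "c < 1"
    and R1: "R1 \<longlonglongrightarrow> 0" and R2: "R2 \<longlonglongrightarrow> 0" and \<epsilon>: "0 < \<epsilon>"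
  shows "(\<lambda>k. 15000 / 4 * (real (n1 k + n2 k)^3 / (\<epsilon> * real (min (n1 k) (n2 k))^4)
     + 2 * real (n1 k + n2 k)^2 / real (min (n1 k) (n2 k))^2 * (R1 k + R2 k))) \<longlonglongrightarrow> 0"
proof -
  define N where "N k = real (n1 k + n2 k)" for k
  define m where "m k = real (min (n1 k) (n2 k))" for k
  have m_lim: "filterlim m at_top sequentially" unfolding m_def
    by (rule filterlim_compose[OF filterlim_real_sequentially min_lim])
  have "eventually (\<lambda>k. 1 \<le> m k) sequentially" using m_lim by (simp add: filterlim_at_top)
  then have "eventually (\<lambda>k. min (real (n1 k) / N k) (1 - real (n1 k) / N k) = m k / N k) sequentially"
  proof eventually_elim
    case (elim k)
    then have N: "0 < N k" by (simp add: m_def N_def)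
    then have "1 - real (n1 k) / N k = real (n2 k) / N k" by (simp add: N_def field_simps)
    then show ?case using N by (auto simp: m_def min_def divide_le_cancel)
  qed
  moreover have "(\<lambda>k. min (real (n1 k) / N k) (1 - real (n1 k) / N k)) \<longlonglongrightarrow> min c (1 - c)"
    unfolding N_def by (intro tendsto_intros ratio_lim)
  ultimately have "(\<lambda>k. m k / N k) \<longlonglongrightarrow> min c (1 - c)" by (rule Lim_transform_eventually[rotated])
  then have "(\<lambda>k. inverse (m k / N k)) \<longlonglongrightarrow> inverse (min c (1 - c))"
    using c by (intro tendsto_inverse) auto
  then have "(\<lambda>k. 15000 / 4 * ((N k / m k)^3 * inverse (m k) / \<epsilon> + 2 * (N k / m k)^2 * (R1 k + R2 k)))
     \<longlonglongrightarrow> 15000 / 4 * ((inverse (min c (1 - c)))^3 * 0 / \<epsilon> + 2 * (inverse (min c (1 - c)))^2 * (0 + 0))"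
    by (intro tendsto_intros tendsto_inverse_0_at_top[OF m_lim] R1 R2) (use \<epsilon> in auto)
  moreover have "15000 / 4 * (N k^3 / (\<epsilon> * m k^4) + 2 * N k^2 / m k^2 * (R1 k + R2 k))
     = 15000 / 4 * ((N k / m k)^3 * inverse (m k) / \<epsilon> + 2 * (N k / m k)^2 * (R1 k + R2 k))" for k
    using \<epsilon> by (cases "m k = 0") (simp_all add: field_simps eval_nat_numeral)
  ultimately show ?thesis by (simp add: N_def m_def)
qed

theorem lemma4:
  fixes n1 n2 :: "nat \<Rightarrow> nat"
    and p1 p2 :: "nat \<Rightarrow> nat \<Rightarrow> real"
    and c :: real
    and M :: "nat \<Rightarrow> 'a measure"
    and X1 X2 :: "nat \<Rightarrow> nat \<Rightarrow> 'a \<Rightarrow> nat"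
  assumes prob_vec1: "\<And>k. k \<ge> 1 \<Longrightarrow> (\<forall>i\<in>{1..k}. p1 k i \<ge> 0) \<and> (\<Sum>i=1..k. p1 k i) = 1"
    and prob_vec2: "\<And>k. k \<ge> 1 \<Longrightarrow> (\<forall>i\<in>{1..k}. p2 k i \<ge> 0) \<and> (\<Sum>i=1..k. p2 k i) = 1"
    and cond1a: "filterlim (\<lambda>k. min (n1 k) (n2 k)) at_top sequentially"
    and cond1b: "(\<lambda>k. real (n1 k) / real (n1 k + n2 k)) \<longlonglongrightarrow> c" and "0 < c" and "c < 1"
    and cond2a: "(\<lambda>k. (MAX i\<in>{1..k}. (p1 k i)^2) / (\<Sum>i=1..k. (p1 k i)^2)) \<longlonglongrightarrow> 0"
    and cond2b: "(\<lambda>k. (MAX i\<in>{1..k}. (p2 k i)^2) / (\<Sum>i=1..k. (p2 k i)^2)) \<longlonglongrightarrow> 0"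
    and cond3: "\<exists>\<epsilon>>0. \<forall>k\<ge>1. real (n1 k + n2 k) * (\<Sum>i=1..k. (p1 k i + p2 k i)^2) \<ge> \<epsilon>"
    and cond4: "(\<lambda>k. (real (n1 k + n2 k))^2 * (\<Sum>i=1..k. (p1 k i - p2 k i)^2)^2)
                  \<in> O(\<lambda>k. \<Sum>i=1..k. (p1 k i + p2 k i)^2)"
    and prob: "\<And>k. prob_space (M k)"
    and indep: "\<And>k. prob_space.indep_vars (M k) (\<lambda>_. count_space UNIV)
                  (\<lambda>(b, i). if b then X1 k i else X2 k i) (UNIV \<times> {1..k})"
    and pois1: "\<And>k i m. i \<in> {1..k} \<Longrightarrow>
                  measure (M k) {\<omega> \<in> space (M k). X1 k i \<omega> = m}
                    = (real (n1 k) * p1 k i)^m / fact m * exp (- (real (n1 k) * p1 k i))"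
    and pois2: "\<And>k i m. i \<in> {1..k} \<Longrightarrow>
                  measure (M k) {\<omega> \<in> space (M k). X2 k i \<omega> = m}
                    = (real (n2 k) * p2 k i)^m / fact m * exp (- (real (n2 k) * p2 k i))"
  shows "weak_conv_m
           (\<lambda>k. distr (M k) borel
              (\<lambda>\<omega>. (\<Sum>i=1..k. fi (n1 k) (n2 k) (p1 k i - p2 k i) (real (X1 k i \<omega>)) (real (X2 k i \<omega>)))
                     / sigma_k k (n1 k) (n2 k) (p1 k) (p2 k)))
           std_normal_distribution"
proof -
  obtain \<epsilon> where \<epsilon>: "\<epsilon> > 0"
    and \<epsilon>_le: "\<And>k. k \<ge> 1 \<Longrightarrow> \<epsilon> \<le> real (n1 k + n2 k) * (\<Sum>i=1..k. (p1 k i + p2 k i)^2)"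
    using cond3 by auto
  define Z where "Z k i \<omega> = fi (n1 k) (n2 k) (p1 k i - p2 k i) (real (X1 k i \<omega>)) (real (X2 k i \<omega>))
    / sigma_k k (n1 k) (n2 k) (p1 k) (p2 k)" for k i \<omega>
  define L where "L k = 15000 / 4 * (real (n1 k + n2 k)^3 / (\<epsilon> * real (min (n1 k) (n2 k))^4)
     + 2 * real (n1 k + n2 k)^2 / real (min (n1 k) (n2 k))^2 * ((MAX i\<in>{1..k}. (p1 k i)^2) / (\<Sum>i=1..k. (p1 k i)^2)
          + (MAX i\<in>{1..k}. (p2 k i)^2) / (\<Sum>i=1..k. (p2 k i)^2)))" for k
  have indep_Z: "prob_space.indep_vars (M k) (\<lambda>_. borel) (Z k) {1..k}" for k
    unfolding Z_def[abs_def]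
    by (rule prob_space.indep_vars_pair_comp[OF prob indep, where G="\<lambda>i x y. fi (n1 k) (n2 k)
        (p1 k i - p2 k i) (real x) (real y) / sigma_k k (n1 k) (n2 k) (p1 k) (p2 k)"])
  then have measurable: "(\<lambda>\<omega>. \<Sum>i\<in>{1..k}. Z k i \<omega>) \<in> borel_measurable (M k)" for k
    by (intro borel_measurable_sum) (auto simp: prob_space.indep_vars_def2[OF prob])
  have L: "L \<longlonglongrightarrow> 0" unfolding L_def[abs_def]
    by (rule lyapunov_bound_tendsto_0[OF cond1a cond1b \<open>0 < c\<close> \<open>c < 1\<close> cond2a cond2b \<epsilon>])
  have "eventually (\<lambda>k. 1 \<le> k \<and> 1 \<le> min (n1 k) (n2 k)) sequentially"
    using cond1a by (auto simp: filterlim_at_top intro: eventually_conj eventually_ge_at_top)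
  then have "eventually (\<lambda>k. finite {1..k} \<and> prob_space.indep_vars (M k) (\<lambda>_. borel) (Z k) {1..k}
      \<and> (\<forall>i\<in>{1..k}. integrable (M k) (\<lambda>\<omega>. Z k i \<omega> ^ 4) \<and> (\<integral>\<omega>. Z k i \<omega> \<partial>M k) = 0)
      \<and> (\<Sum>i\<in>{1..k}. \<integral>\<omega>. Z k i \<omega> ^ 2 \<partial>M k) = 1
      \<and> (\<Sum>i\<in>{1..k}. \<integral>\<omega>. Z k i \<omega> ^ 4 \<partial>M k) \<le> L k) sequentially"
  proof eventually_elim
    case (elim k)
    then have k: "1 \<le> k" and m: "0 < real (min (n1 k) (n2 k))"
      "real (min (n1 k) (n2 k)) \<le> real (n1 k)" "real (min (n1 k) (n2 k)) \<le> real (n2 k)" by auto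
    note ratio = lyapunov_ratio_le[OF _ _ _ _ m _ _ \<epsilon> \<epsilon>_le[OF k]]
    note summands = fi_normalised_summands[OF prob indep pois1 pois2 _ m ratio(1)]
    show ?case
      using prob_vec1[OF k] prob_vec2[OF k] indep_Z summands ratio(2)
      by (auto simp: Z_def L_def intro: order_trans)
  qed
  from clt_fourth_moment[OF prob measurable this L] show ?thesis
    by (simp add: Z_def sum_divide_distrib)
qed

end
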